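(* Let $n$ be a positive integer and let $A(n)=(a_{ij})_{i,j\in\mathbb{N}}$ be the greedy matrix described in the context. For each $i\geq 1$ let $g(i)$ be the smallest $j$ such that $a_{ij}=1$. Then $g$ is monotonically increasing, i.e. $g(i+1)\geq g(i)$ for all $i\ge 1$.
   Context: $\mathbb{N}=\{1,2,3,\dots\}$. Fix a positive integer $n$. The infinite $\{0,1\}$-matrix $A(n)=(a_{ij})_{i,j\in\mathbb{N}}$ is defined recursively. Its entries are determined row by row (row $1$ first), and within each row from left to right, so that $a_{kl}$ is determined after all $a_{ij}$ with $i<k$ and all $a_{kj}$ with $j<l$. One sets $a_{kl}=1$ if and only if all of the following hold: (1) $\sum_{j<l}a_{kj}<n+1$; (2) $\sum_{i<k}a_{il}<n+1$; (3) there is no pair $(i,j)$ with $1\le i<k$, $1\le j<l$ and $a_{ij}=a_{il}=a_{kj}=1$. Otherwise $a_{kl}=0$. *)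

theory Defs
  imports Main
begin

text \<open>Entries are indexed by positive integers i, j >= 1;
  gm n k l is True iff a_kl = 1. Values at index 0 are irrelevant (set to False).
  Condition (1): number of ones among a_kj, 1 <= j < l, is < n+1;
  condition (2): number of ones among a_il, 1 <= i < k, is < n+1;
  condition (3): no i, j with 1 <= i < k, 1 <= j < l and a_ij = a_il = a_kj = 1.\<close>

lemma gm_collect_cong [fundef_cong]:
  "A = B \<Longrightarrow> (\<And>x. x \<in> B \<Longrightarrow> P x = Q x) \<Longrightarrow> {x \<in> A. P x} = {x \<in> B. Q x}"
  by auto

function gm :: "nat \<Rightarrow> nat \<Rightarrow> nat \<Rightarrow> bool" where
  "gm n k l =
    (if k = 0 \<or> l = 0 then False
     else card {j \<in> {1..<l}. gm n k j} < n + 1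
        \<and> card {i \<in> {1..<k}. gm n i l} < n + 1
        \<and> \<not> (\<exists>i \<in> {1..<k}. \<exists>j \<in> {1..<l}. gm n i j \<and> gm n i l \<and> gm n k j))"
  by pat_completeness auto
termination
  by (relation "measures [\<lambda>(n,k,l). k, \<lambda>(n,k,l). l]") auto

end

theory Submission
  imports Defs
begin

text \<open>Each row of A(n) contains at most n+1 ones, so the finitely many rows above row k
  saturate only finitely many columns. In a row without ones, conditions (1) and (3) hold in
  every column, so every column would have to be saturated; hence every row has a one.
  If row i+1 had its first one in a column h left of the first one of row i, then a_ih = 0
  although row i is empty up to h; so column h is already saturated above row i, and
  condition (2) forbids a_(i+1)h = 1.\<close>

(* gm.simps unfolds gm on its own right-hand side, so as a simp rule it loops. *)
declare gm.simps[simp del]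

lemma gm_0_right [simp]: "\<not> gm n k 0"
  by (subst gm.simps) simp

lemma gm_iff:
  assumes "k \<ge> 1" "l \<ge> 1"
  shows "gm n k l \<longleftrightarrow>
    card {j \<in> {1..<l}. gm n k j} < n + 1
    \<and> card {i \<in> {1..<k}. gm n i l} < n + 1
    \<and> \<not> (\<exists>i \<in> {1..<k}. \<exists>j \<in> {1..<l}. gm n i j \<and> gm n i l \<and> gm n k j)"
  using assms by (subst gm.simps) simp

lemma card_column_prefix_less:
  assumes "gm n k l"
  shows "card {i \<in> {1..<k}. gm n i l} < n + 1"
  using assms by (subst (asm) gm.simps) (simp split: if_splits)

lemma card_row_prefix_less:
  assumes "gm n k l"
  shows "card {j \<in> {1..<l}. gm n k j} < n + 1"
  using assms by (subst (asm) gm.simps) (simp split: if_splits)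

lemma column_saturated_if_row_prefix_empty:
  assumes "k \<ge> 1" "l \<ge> 1" "\<not> gm n k l" "\<forall>j \<in> {1..<l}. \<not> gm n k j"
  shows "card {i \<in> {1..<k}. gm n i l} \<ge> n + 1"
proof -
  have row_prefix_empty: "{j \<in> {1..<l}. gm n k j} = {}"
    using assms(4) by blast
  have "card {j \<in> {1..<l}. gm n k j} < n + 1"
    unfolding row_prefix_empty by simp
  moreover have "\<not> (\<exists>i \<in> {1..<k}. \<exists>j \<in> {1..<l}. gm n i j \<and> gm n i l \<and> gm n k j)"
    using assms(4) by blast
  ultimately have "\<not> card {i \<in> {1..<k}. gm n i l} < n + 1"
    using gm_iff[OF assms(1,2), of n] assms(3) by blast
  then show ?thesis
    by simp
qed

lemma card_row_prefix_le: "card {j \<in> {1..<l}. gm n k j} \<le> n + 1"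
proof (induction l)
  case 0
  then show ?case by simp
next
  case (Suc l)
  show ?case
  proof (cases "gm n k l")
    case True
    moreover have "l \<ge> 1"
      using True by (cases l) auto
    ultimately have "{j \<in> {1..<Suc l}. gm n k j} = insert l {j \<in> {1..<l}. gm n k j}"
      by (auto simp: less_Suc_eq)
    with card_row_prefix_less[OF True] show ?thesis
      by simp
  next
    case False
    then have "{j \<in> {1..<Suc l}. gm n k j} = {j \<in> {1..<l}. gm n k j}"
      by (auto simp: less_Suc_eq)
    with Suc.IH show ?thesis
      by simp
  qed
qed

lemma finite_row: "finite {j. gm n k j}"
proof (rule ccontr)
  assume "infinite {j. gm n k j}"
  then obtain B where B: "B \<subseteq> {j. gm n k j}" "finite B" "card B = n + 2"
    using infinite_arbitrarily_large by blast
  have "B \<subseteq> {j \<in> {1..<Max B + 1}. gm n k j}"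
  proof
    fix x
    assume "x \<in> B"
    with B have "gm n k x" "x \<le> Max B"
      by auto
    moreover from \<open>gm n k x\<close> have "x \<noteq> 0"
      by (metis gm_0_right)
    ultimately show "x \<in> {j \<in> {1..<Max B + 1}. gm n k j}"
      by simp
  qed
  then have "card B \<le> card {j \<in> {1..<Max B + 1}. gm n k j}"
    by (intro card_mono) auto
  with card_row_prefix_le[where l = "Max B + 1" and n = n and k = k] B(3) show False
    by simp
qed

lemma row_has_one:
  assumes "k \<ge> 1"
  shows "\<exists>l \<ge> 1. gm n k l"
proof (rule ccontr)
  assume empty: "\<not> (\<exists>l \<ge> 1. gm n k l)"
  have "{1..} \<subseteq> (\<Union>i \<in> {1..<k}. {j. gm n i j})"
  proof
    fix l :: nat
    assume "l \<in> {1..}"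
    then have l: "l \<ge> 1"
      by simp
    have "\<not> gm n k l" "\<forall>j \<in> {1..<l}. \<not> gm n k j"
      using empty l by auto
    with assms l have "card {i \<in> {1..<k}. gm n i l} \<ge> n + 1"
      by (rule column_saturated_if_row_prefix_empty)
    then have "{i \<in> {1..<k}. gm n i l} \<noteq> {}"
      by (metis card.empty not_one_le_zero le_add2 order_trans)
    then show "l \<in> (\<Union>i \<in> {1..<k}. {j. gm n i j})"
      by blast
  qed
  moreover have "finite (\<Union>i \<in> {1..<k}. {j. gm n i j})"
    using finite_row by blast
  ultimately have "finite {1::nat..}"
    by (rule finite_subset)
  then show False
    using infinite_Ici by blast
qed

theorem lemma3p2:
  fixes n :: nat
  assumes "n \<ge> 1"
  shows "\<forall>i \<ge> 1. (LEAST j. j \<ge> 1 \<and> gm n (i + 1) j) \<ge> (LEAST j. j \<ge> 1 \<and> gm n i j)"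
proof (intro allI impI)
  fix i :: nat
  assume i: "i \<ge> 1"
  define h where "h = (LEAST j. j \<ge> 1 \<and> gm n (i + 1) j)"
  define g where "g = (LEAST j. j \<ge> 1 \<and> gm n i j)"
  have h: "h \<ge> 1" "gm n (i + 1) h"
    using LeastI_ex[OF row_has_one[of "i + 1" n]] unfolding h_def by auto
  show "h \<ge> g"
  proof (rule ccontr)
    assume "\<not> h \<ge> g"
    have before_g: "\<not> gm n i j" if "j \<ge> 1" "j \<le> h" for j
    proof -
      from that \<open>\<not> h \<ge> g\<close> have "j < g"
        by simp
      with that(1) show ?thesis
        unfolding g_def by (blast dest: not_less_Least)
    qed
    have "\<not> gm n i h" "\<forall>j \<in> {1..<h}. \<not> gm n i j"
      using before_g h(1) by auto
    with i h(1) have "card {i' \<in> {1..<i}. gm n i' h} \<ge> n + 1"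
      by (rule column_saturated_if_row_prefix_empty)
    also have "card {i' \<in> {1..<i}. gm n i' h} \<le> card {i' \<in> {1..<i + 1}. gm n i' h}"
      by (rule card_mono) auto
    finally show False
      using card_column_prefix_less[OF h(2)] by simp
  qed
qed

end
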